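(* For $d=3$ and $\lambda\ge 2/\sqrt3$, the only positive solution $z$ of the fixed-point equation $z=\phi_3(z,\lambda)$ is $$\mu_{3,\infty}(\lambda)=\frac{3\lambda^2+\lambda\sqrt{9\lambda^2-12}+4}{\sqrt{18\lambda^2+6\lambda\sqrt{9\lambda^2-12}}},$$ and the corresponding alignment $\alpha_{3,\infty}(\lambda)=\omega_3(\mu_{3,\infty}(\lambda),\lambda)$ equals $$\alpha_{3,\infty}(\lambda)=\sqrt{\frac12+\sqrt{\frac{3\lambda^2-4}{12\lambda^2}}}.$$
   Context: For $d=3$: $\beta_3=1/\sqrt{6}\cdot\sqrt{4}\,$ i.e. $\beta_3=2/\sqrt6$, and $m_3(z)=\frac{2}{\beta_3^2}\left(-z+z\sqrt{1-\beta_3^2/z^2}\right)=-3z+3\sqrt{z^2-2/3}$. The functions are $\omega_3(z,\lambda)=\frac1\lambda\left(z+\frac13 m_3(z/2)\right)=\frac1\lambda\left(\frac z2+\sqrt{\frac{z^2}{4}-\frac23}\right)$ and $\phi_3(z,\lambda)=\lambda\,\omega_3(z,\lambda)^3-\frac12 m_3(z/2)$. *)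

theory Defs
  imports Complex_Main
begin

definition m3 :: "real \<Rightarrow> real" where
  "m3 z = -3 * z + 3 * sqrt (z^2 - 2/3)"

definition omega3 :: "real \<Rightarrow> real \<Rightarrow> real" where
  "omega3 z l = (1/l) * (z + (1/3) * m3 (z/2))"

definition phi3 :: "real \<Rightarrow> real \<Rightarrow> real" where
  "phi3 z l = l * (omega3 z l)^3 - (1/2) * m3 (z/2)"

definition mu3 :: "real \<Rightarrow> real" where
  "mu3 l = (3 * l^2 + l * sqrt (9 * l^2 - 12) + 4)
            / sqrt (18 * l^2 + 6 * l * sqrt (9 * l^2 - 12))"

end

theory Submission
  imports Defs
begin

text \<open>Every admissible z is uniquely of the form z = w + 2/(3w) with 3w^2 \<ge> 2, namely
  w = z/2 + sqrt (z^2/4 - 2/3). In the variable w the square root in m3 disappears: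
  m3 (z/2) = -2/w, \<omega>3 z \<lambda> = w/\<lambda> and \<phi>3 z \<lambda> = w^3/\<lambda>^2 + 1/w, so the fixed-point equation
  becomes the quadratic 3v^2 - 3\<lambda>^2 v + \<lambda>^2 = 0 in v = w^2. Its smaller root lies below 2/3
  (unless both roots coincide), so the larger root v = \<lambda>^2/2 + \<lambda> sqrt (9\<lambda>^2 - 12)/6 is the only
  admissible one; it yields \<mu>3 and \<alpha>3 = sqrt v / \<lambda>.\<close>

definition joukowski :: "real \<Rightarrow> real" where
  "joukowski w = w + 2 / (3 * w)"

lemma joukowski_half_sq_sub:
  assumes "w \<noteq> 0"
  shows "(joukowski w / 2)^2 - 2/3 = ((w - 2 / (3 * w)) / 2)^2"
  using assms by (simp add: joukowski_def field_simps power2_eq_square)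

lemma sqrt_joukowski:
  assumes "w > 0" "3 * w^2 \<ge> 2"
  shows "sqrt ((joukowski w / 2)^2 - 2/3) = (w - 2 / (3 * w)) / 2"
proof -
  have "2 / (3 * w) \<le> w"
    using assms by (simp add: field_simps power2_eq_square)
  then show ?thesis using assms by (simp add: joukowski_half_sq_sub)
qed

lemma m3_joukowski:
  assumes "w > 0" "3 * w^2 \<ge> 2"
  shows "m3 (joukowski w / 2) = -2 / w"
  using assms by (simp add: m3_def sqrt_joukowski) (simp add: joukowski_def field_simps)

lemma omega3_joukowski:
  assumes "w > 0" "3 * w^2 \<ge> 2"
  shows "omega3 (joukowski w) l = w / l"
  using assms by (simp add: omega3_def m3_joukowski) (simp add: joukowski_def field_simps)

lemma phi3_joukowski:
  assumes "w > 0" "3 * w^2 \<ge> 2"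
  shows "phi3 (joukowski w) l = w^3 / l^2 + 1 / w"
  using assms by (cases "l = 0") (simp_all add: phi3_def omega3_joukowski m3_joukowski power_divide
      power2_eq_square power3_eq_cube)

lemma joukowski_fixed_point_iff:
  assumes "w > 0" "3 * w^2 \<ge> 2" "l \<noteq> 0"
  shows "joukowski w = phi3 (joukowski w) l \<longleftrightarrow> 3 * (w^2)^2 - 3 * l^2 * w^2 + l^2 = 0"
proof -
  have diff: "joukowski w - (w^3 / l^2 + 1 / w) = - (3 * (w^2)^2 - 3 * l^2 * w^2 + l^2) / (3 * w * l^2)"
    using assms by (simp add: joukowski_def field_simps power2_eq_square power3_eq_cube)
  have "joukowski w = phi3 (joukowski w) l \<longleftrightarrow> joukowski w - (w^3 / l^2 + 1 / w) = 0"
    by (simp add: phi3_joukowski[OF assms(1,2)])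
  also have "\<dots> \<longleftrightarrow> 3 * (w^2)^2 - 3 * l^2 * w^2 + l^2 = 0"
    unfolding diff using assms by (simp, linarith)
  finally show ?thesis .
qed

lemma joukowski_admissible:
  assumes "w > 0"
  shows "joukowski w > 0" "(joukowski w)^2 / 4 \<ge> 2/3"
proof -
  show "joukowski w > 0" using assms by (simp add: joukowski_def add_pos_pos)
  have "(joukowski w / 2)^2 - 2/3 \<ge> 0"
    using assms by (simp add: joukowski_half_sq_sub)
  then show "(joukowski w)^2 / 4 \<ge> 2/3" by (simp add: power_divide)
qed

lemma admissible_obtain_joukowski:
  assumes "z > 0" "z^2 / 4 \<ge> 2/3"
  obtains w where "w > 0" "3 * w^2 \<ge> 2" "z = joukowski w"
proof -
  define s where "s = sqrt (z^2/4 - 2/3)"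
  have s0: "s \<ge> 0" and s2: "s^2 = z^2/4 - 2/3" using assms by (auto simp: s_def)
  define w where "w = z/2 + s"
  have w0: "w > 0" using assms s0 by (simp add: w_def)
  have "w * (z/2 - s) = 2/3" using s2 by (simp add: w_def algebra_simps power2_eq_square)
  then have conj: "z/2 - s = 2 / (3 * w)" using w0 by (simp add: field_simps)
  then have "2 / (3 * w) \<le> w" using s0 w_def by linarith
  then have "3 * w^2 \<ge> 2" using w0 by (simp add: field_simps power2_eq_square)
  moreover have "z = joukowski w" using conj by (simp add: joukowski_def w_def)
  ultimately show ?thesis using that w0 by blast
qed

lemma admissible_quadratic_root_iff:
  fixes l v :: real
  assumes "l > 0" "3 * l^2 \<ge> 4" "3 * v \<ge> 2"
  shows "3 * v^2 - 3 * l^2 * v + l^2 = 0 \<longleftrightarrow> v = l^2/2 + l * sqrt (9 * l^2 - 12) / 6"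
proof -
  define r where "r = sqrt (9 * l^2 - 12)"
  have r0: "r \<ge> 0" and r2: "r^2 = 9 * l^2 - 12" using assms(2) by (auto simp: r_def)
  have lr: "(l * r)^2 = l^2 * (9 * l^2 - 12)" using r2 by (simp add: power_mult_distrib)
  have factor: "12 * (3 * v^2 - 3 * l^2 * v + l^2) = (6 * v - 3 * l^2)^2 - (l * r)^2"
    unfolding lr by (simp add: power2_eq_square algebra_simps)
  have small_root: "6 * v - 3 * l^2 = l * r" if "6 * v - 3 * l^2 = - (l * r)"
  proof -
    have "l * r \<le> 3 * l^2 - 4" using that assms(3) by linarith
    then have "(l * r)^2 \<le> (3 * l^2 - 4)^2" using assms(1) r0 by (intro power_mono) auto
    then have "3 * l^2 \<le> 4" unfolding lr by (simp add: power2_eq_square algebra_simps)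
    then have "r^2 = 0" using assms(2) r2 by simp
    then have "r = 0" by simp
    then show ?thesis using that by simp
  qed
  have "3 * v^2 - 3 * l^2 * v + l^2 = 0 \<longleftrightarrow> (6 * v - 3 * l^2)^2 = (l * r)^2"
    using factor by (smt (verit))
  also have "\<dots> \<longleftrightarrow> 6 * v - 3 * l^2 = l * r"
    using small_root by (auto simp: power2_eq_iff)
  also have "\<dots> \<longleftrightarrow> v = l^2/2 + l * r / 6" by linarith
  finally show ?thesis unfolding r_def .
qed

definition fixed_w :: "real \<Rightarrow> real" where
  "fixed_w l = sqrt (l^2/2 + l * sqrt (9 * l^2 - 12) / 6)"

lemma fixed_w_admissible:
  assumes "l > 0" "3 * l^2 \<ge> 4"
  shows "fixed_w l > 0" "3 * (fixed_w l)^2 \<ge> 2"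
proof -
  have "l * sqrt (9 * l^2 - 12) \<ge> 0" using assms by simp
  then have "3 * (l^2/2 + l * sqrt (9 * l^2 - 12) / 6) \<ge> 2" using assms(2) by simp
  then show "fixed_w l > 0" "3 * (fixed_w l)^2 \<ge> 2" by (auto simp: fixed_w_def)
qed

lemma joukowski_fixed_point_iff_fixed_w:
  assumes "w > 0" "3 * w^2 \<ge> 2" "l > 0" "3 * l^2 \<ge> 4"
  shows "joukowski w = phi3 (joukowski w) l \<longleftrightarrow> w = fixed_w l"
proof -
  have "joukowski w = phi3 (joukowski w) l \<longleftrightarrow> w^2 = (fixed_w l)^2"
    using assms joukowski_fixed_point_iff admissible_quadratic_root_iff[of l "w^2"]
      fixed_w_admissible[OF assms(3,4)] by (simp add: fixed_w_def)
  also have "\<dots> \<longleftrightarrow> w = fixed_w l"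
    using assms(1) fixed_w_admissible[OF assms(3,4)] by (simp add: power2_eq_iff_nonneg)
  finally show ?thesis .
qed

lemma mu3_eq_joukowski:
  assumes "l > 0" "3 * l^2 \<ge> 4"
  shows "mu3 l = joukowski (fixed_w l)"
proof -
  define r where "r = sqrt (9 * l^2 - 12)"
  define w where "w = fixed_w l"
  have w0: "w > 0" using fixed_w_admissible[OF assms] by (simp add: w_def)
  have w2: "w^2 = l^2/2 + l * r / 6"
    using fixed_w_admissible[OF assms] by (simp add: w_def r_def fixed_w_def)
  have "18 * l^2 + 6 * l * r = (6 * w)^2" using w2 by (simp add: algebra_simps)
  then have den: "sqrt (18 * l^2 + 6 * l * r) = 6 * w" using w0 by (simp only: real_sqrt_abs)
  have "mu3 l = (6 * w^2 + 4) / (6 * w)" unfolding mu3_def r_def[symmetric] den w2 by simp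
  also have "\<dots> = joukowski w" using w0 by (simp add: joukowski_def field_simps power2_eq_square)
  finally show ?thesis unfolding w_def .
qed

lemma fixed_points_phi3:
  assumes "l > 0" "3 * l^2 \<ge> 4"
  shows "{z. z > 0 \<and> z^2 / 4 \<ge> 2/3 \<and> z = phi3 z l} = {mu3 l}"
proof (intro equalityI subsetI)
  fix z assume "z \<in> {z. z > 0 \<and> z^2 / 4 \<ge> 2/3 \<and> z = phi3 z l}"
  then obtain w where "w > 0" "3 * w^2 \<ge> 2" "z = joukowski w" "z = phi3 z l"
    using admissible_obtain_joukowski by auto
  with assms show "z \<in> {mu3 l}"
    by (simp add: joukowski_fixed_point_iff_fixed_w mu3_eq_joukowski)
next
  fix z assume "z \<in> {mu3 l}"
  with assms fixed_w_admissible[OF assms] joukowski_admissible[of "fixed_w l"]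
  show "z \<in> {z. z > 0 \<and> z^2 / 4 \<ge> 2/3 \<and> z = phi3 z l}"
    by (simp add: joukowski_fixed_point_iff_fixed_w mu3_eq_joukowski)
qed

lemma omega3_mu3:
  assumes "l > 0" "3 * l^2 \<ge> 4"
  shows "omega3 (mu3 l) l = sqrt (1/2 + sqrt ((3 * l^2 - 4) / (12 * l^2)))"
proof -
  have "(3 * l^2 - 4) / (12 * l^2) = (sqrt (9 * l^2 - 12) / (6 * l))^2"
    using assms by (simp add: power_divide power_mult_distrib field_simps)
  then have ratio: "sqrt ((3 * l^2 - 4) / (12 * l^2)) = sqrt (9 * l^2 - 12) / (6 * l)"
    using assms by simp
  have "omega3 (mu3 l) l = fixed_w l / l"
    using fixed_w_admissible[OF assms] by (simp add: mu3_eq_joukowski[OF assms] omega3_joukowski)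
  also have "\<dots> = sqrt ((l^2/2 + l * sqrt (9 * l^2 - 12) / 6) / l^2)"
    using assms(1) by (simp add: fixed_w_def real_sqrt_divide)
  also have "(l^2/2 + l * sqrt (9 * l^2 - 12) / 6) / l^2 = 1/2 + sqrt ((3 * l^2 - 4) / (12 * l^2))"
    unfolding ratio using assms(1) by (simp add: field_simps power2_eq_square)
  finally show ?thesis .
qed

theorem lemma1:
  fixes l :: real
  assumes "l \<ge> 2 / sqrt 3"
  shows "{z::real. z > 0 \<and> z^2 / 4 \<ge> 2/3 \<and> z = phi3 z l} = {mu3 l}
     \<and> omega3 (mu3 l) l = sqrt (1/2 + sqrt ((3 * l^2 - 4) / (12 * l^2)))"
proof -
  have "0 < 2 / sqrt (3::real)" by simp
  then have l0: "l > 0" using assms by linarith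
  have "(2 / sqrt 3)^2 \<le> l^2" using assms by (intro power_mono) auto
  then have "3 * l^2 \<ge> 4" by (simp add: power_divide field_simps)
  with l0 show ?thesis using fixed_points_phi3 omega3_mu3 by blast
qed

end
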